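(* Suppose $1 \le p, p_1, p_2 < \infty$ and $0 \le \alpha_1, \alpha_2 \le 1$ satisfy $\alpha_1 + \alpha_2 = 1$ and $\frac1p = \frac{\alpha_1}{p_1} + \frac{\alpha_2}{p_2}$. Suppose also $A = A_1 + A_2$ (non-negative integers). Let $U \subset B_R$ be a finite union of the balls $B_{K^2}$. Then $$ \| E f \|_{\mathrm{BL}^p_{k,A}(U)} \le \| E f \|^{\alpha_1}_{\mathrm{BL}^{p_1}_{k,A_1}(U)} \| E f \|^{\alpha_2}_{\mathrm{BL}^{p_2}_{k,A_2}(U)}.$$
   Context: $E f(x) := \int_{B^{n-1}} e^{ i ( x' \cdot \omega + x_n | \omega |^2) } f(\omega)\, d \omega$. $G(\omega) = (-2\omega,1)/|(-2\omega,1)|$. $B^{n-1}$ is a disjoint union of approximate balls $\tau$ of radius $K^{-1}$, $f_\tau = f 1_\tau$, $G(\tau)$ the image of $\tau$ under $G$, $\mathrm{Angle}(G(\tau),V)$ the smallest angle between nonzero vectors of $V$ and of $G(\tau)$. $B_R$ is decomposed into balls $B_{K^2}$ of radius $K^2$. For such a ball and exponent $p$, $\mu^{(p)}_{Ef}(B_{K^2}) := \min_{V_1,\dots,V_A} \max_{\tau: \mathrm{Angle}(G(\tau),V_a) > K^{-1}\,\forall a} \int_{B_{K^2}} |Ef_\tau|^p$, minimum over $(k-1)$-dimensional subspaces $V_a$ of $\mathbb{R}^n$ (when $A=0$, the maximum over all $\tau$). For $U$ a finite union of balls $B_{K^2}$, $\|Ef\|^p_{\mathrm{BL}^p_{k,A}(U)}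 := \sum_{B_{K^2}\subset U}\mu^{(p)}_{Ef}(B_{K^2})$. *)

theory Defs
  imports "HOL-Analysis.Analysis"
begin

text \<open>R^{n-1} is modelled by a Euclidean space 'a, and R^n by 'a \<times> real,
  a point x = (x', x_n).\<close>

definition Eop :: "('a::euclidean_space \<Rightarrow> complex) \<Rightarrow> 'a \<times> real \<Rightarrow> complex" where
  "Eop f x = integral (ball 0 1)
      (\<lambda>\<omega>. exp (\<i> * complex_of_real (fst x \<bullet> \<omega> + snd x * (norm \<omega>)^2)) * f \<omega>)"

definition Gmap :: "'a::euclidean_space \<Rightarrow> 'a \<times> real" where
  "Gmap \<omega> = (1 / norm (-2 *\<^sub>R \<omega>, 1::real)) *\<^sub>R (-2 *\<^sub>R \<omega>, 1::real)"

definition vangle :: "'b::real_inner \<Rightarrow> 'b \<Rightarrow> real" where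
  "vangle u v = arccos ((u \<bullet> v) / (norm u * norm v))"

definition set_angle :: "'b::real_inner set \<Rightarrow> 'b set \<Rightarrow> real" where
  "set_angle S V = Inf {vangle u v | u v. u \<in> S \<and> u \<noteq> 0 \<and> v \<in> V \<and> v \<noteq> 0}"

definition cap_decomp :: "real \<Rightarrow> 'a::euclidean_space set set \<Rightarrow> bool" where
  "cap_decomp K T \<longleftrightarrow> finite T \<and> \<Union>T = ball 0 1 \<and> pairwise disjnt T \<and>
     (\<forall>\<tau>\<in>T. \<tau> \<noteq> {} \<and> \<tau> \<in> sets lebesgue \<and> (\<exists>c. \<tau> \<subseteq> cball c (1/K)))"

definition ball_decomp :: "real \<Rightarrow> real \<Rightarrow> ('a::euclidean_space \<times> real) set set \<Rightarrow> bool" where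
  "ball_decomp K R \<B> \<longleftrightarrow> finite \<B> \<and> ball 0 R \<subseteq> \<Union>\<B> \<and> (\<forall>B\<in>\<B>. \<exists>c. B = ball c (K^2))"

definition mu :: "nat \<Rightarrow> real \<Rightarrow> nat \<Rightarrow> real \<Rightarrow> 'a::euclidean_space set set \<Rightarrow>
    ('a \<Rightarrow> complex) \<Rightarrow> ('a \<times> real) set \<Rightarrow> real" where
  "mu k K A p T f B =
     (INF V \<in> {V :: nat \<Rightarrow> ('a \<times> real) set. \<forall>a<A. subspace (V a) \<and> dim (V a) = k - 1}.
        Max (insert 0 {integral B (\<lambda>x. cmod (Eop (\<lambda>\<omega>. indicator \<tau> \<omega> * f \<omega>) x) powr p) | \<tau>.
                 \<tau> \<in> T \<and> (\<forall>a<A. set_angle (Gmap ` \<tau>) (V a) > 1 / K)}))"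

text \<open>p-th power of the broad norm: sum of mu over the balls of the decomposition contained in U.\<close>
definition BLp :: "nat \<Rightarrow> real \<Rightarrow> nat \<Rightarrow> real \<Rightarrow> 'a::euclidean_space set set \<Rightarrow>
    ('a \<Rightarrow> complex) \<Rightarrow> ('a \<times> real) set set \<Rightarrow> ('a \<times> real) set \<Rightarrow> real" where
  "BLp k K A p T f \<B> U = (\<Sum>B\<in>{B\<in>\<B>. B \<subseteq> U}. mu k K A p T f B)"

end

theory Submission
  imports Defs
begin

text \<open>For a single cap tau and ball B, Hoelder's inequality applied to
  |E f_tau|^p = (|E f_tau|^p1)^a (|E f_tau|^p2)^b, with a = alpha1 p / p1 and b = alpha2 p / p2,
  bounds the integral of |E f_tau|^p over B by those of |E f_tau|^p1 and |E f_tau|^p2.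
  Concatenating optimal tuples V_1, ..., V_A1 and V'_1, ..., V'_A2 gives an admissible A-tuple,
  and a cap transverse to it is transverse to both halves; hence
  mu^(p) <= (mu^(p1))^a (mu^(p2))^b on every ball. Hoelder's inequality for the finite sum over
  the balls of U and taking p-th roots finish the proof.\<close>

lemma powr_mult_powr_le_scaled_mean:
  fixes a b s t u v :: real
  assumes "0 \<le> a" "0 \<le> b" "a + b = 1" "s > 0" "t > 0" "u \<ge> 0" "v \<ge> 0"
  shows "u powr a * v powr b \<le> (a * s * u + b * t * v) / (s powr a * t powr b)"
proof (cases "u = 0 \<or> v = 0")
  case True
  then show ?thesis using assms by (auto intro!: divide_nonneg_pos add_nonneg_nonneg)
next
  case False
  then have "u > 0" "v > 0" using assms by auto
  then have "(s powr a * t powr b) * (u powr a * v powr b) \<le> a * s * u + b * t * v"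
    using Youngs_inequality_0[of a b "s * u" "t * v"] assms by (simp add: powr_mult mult_ac)
  moreover have "s powr a * t powr b > 0" using assms by simp
  ultimately show ?thesis by (simp add: pos_le_divide_eq mult.commute)
qed

lemma nonpos_if_le_divide_powr:
  fixes W c a :: real
  assumes "a > 0" "c \<ge> 0" and le: "\<And>s. s > 0 \<Longrightarrow> W \<le> c / s powr a"
  shows "W \<le> 0"
proof (rule ccontr)
  assume "\<not> W \<le> 0"
  then have W: "W > 0" by simp
  define s where "s = (c / W + 1) powr (1 / a)"
  have "c / W \<ge> 0" using W assms by simp
  then have "c / W + 1 > 0" by linarith
  then have "s > 0" "s powr a = c / W + 1"
    using assms by (simp_all add: s_def powr_powr)
  then have "c / s powr a < W" using W assms by (simp add: divide_less_eq field_simps)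
  with le[OF \<open>s > 0\<close>] show False by simp
qed

text \<open>For U, V > 0 the product U^a V^b is the infimum of the right-hand sides of
  the hypothesis bnd (attained at s = 1/U, t = 1/V). The extra hypotheses for a = 0 or b = 0
  are needed because 0 powr 0 = 0.\<close>

lemma le_powr_mult_powrI:
  fixes a b U V W :: real
  assumes ab: "0 \<le> a" "0 \<le> b" "a + b = 1" and "U \<ge> 0" "V \<ge> 0"
    and bnd: "\<And>s t. s > 0 \<Longrightarrow> t > 0 \<Longrightarrow> W \<le> (a * s * U + b * t * V) / (s powr a * t powr b)"
    and zero1: "a = 0 \<Longrightarrow> U = 0 \<Longrightarrow> W \<le> 0"
    and zero2: "b = 0 \<Longrightarrow> V = 0 \<Longrightarrow> W \<le> 0"
  shows "W \<le> U powr a * V powr b"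
proof -
  consider "U > 0" "V > 0" | "U = 0" | "V = 0" using assms by linarith
  then show ?thesis
  proof cases
    case 1
    have "W \<le> (a * (1/U) * U + b * (1/V) * V) / ((1/U) powr a * (1/V) powr b)"
      using bnd[of "1/U" "1/V"] 1 by simp
    also have "\<dots> = U powr a * V powr b" using 1 ab by (simp add: powr_divide)
    finally show ?thesis .
  next
    case 2
    have "W \<le> 0"
    proof (cases "a = 0")
      case False
      show ?thesis
        by (rule nonpos_if_le_divide_powr[of a "b * V"]) (use False ab assms bnd[of _ 1] 2 in auto)
    qed (use zero1 2 in simp)
    then show ?thesis using 2 by simp
  next
    case 3
    have "W \<le> 0"
    proof (cases "b = 0")
      case False
      show ?thesis
        by (rule nonpos_if_le_divide_powr[of b "a * U"])
           (use False ab assms bnd[of 1] 3 in \<open>auto simp: mult.commute\<close>)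
    qed (use zero2 3 in simp)
    then show ?thesis using 3 by simp
  qed
qed

lemma Holder_sum:
  fixes x y w :: "'i \<Rightarrow> real"
  assumes ab: "0 \<le> a" "0 \<le> b" "a + b = 1" and fin: "finite I"
    and pw: "\<And>i. i \<in> I \<Longrightarrow> x i \<ge> 0 \<and> y i \<ge> 0 \<and> w i \<le> x i powr a * y i powr b"
  shows "sum w I \<le> sum x I powr a * sum y I powr b"
proof (rule le_powr_mult_powrI[OF ab])
  show "sum x I \<ge> 0" "sum y I \<ge> 0" using pw by (auto intro: sum_nonneg)
  fix s t :: real assume st: "s > 0" "t > 0"
  let ?c = "s powr a * t powr b"
  have "sum w I \<le> (\<Sum>i\<in>I. (a * s * x i + b * t * y i) / ?c)"
    using pw powr_mult_powr_le_scaled_mean[OF ab st] by (intro sum_mono) (meson order_trans)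
  also have "\<dots> = (a * s * sum x I + b * t * sum y I) / ?c"
    unfolding sum_divide_distrib[symmetric] by (simp add: sum.distrib sum_distrib_left)
  finally show "sum w I \<le> (a * s * sum x I + b * t * sum y I) / ?c" .
next
  assume "a = 0" "sum x I = 0"
  then have "\<forall>i\<in>I. x i = 0" using pw fin by (subst sum_nonneg_eq_0_iff[symmetric]) auto
  then show "sum w I \<le> 0" using pw \<open>a = 0\<close> by (intro sum_nonpos) fastforce
next
  assume "b = 0" "sum y I = 0"
  then have "\<forall>i\<in>I. y i = 0" using pw fin by (subst sum_nonneg_eq_0_iff[symmetric]) auto
  then show "sum w I \<le> 0" using pw \<open>b = 0\<close> by (intro sum_nonpos) fastforce
qed

lemma Holder_integral:
  fixes u v w :: "'n::euclidean_space \<Rightarrow> real"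
  assumes ab: "0 \<le> a" "0 \<le> b" "a + b = 1"
    and "u integrable_on S" "v integrable_on S" "w integrable_on S"
    and pw: "\<And>x. x \<in> S \<Longrightarrow> u x \<ge> 0 \<and> v x \<ge> 0 \<and> w x = u x powr a * v x powr b"
    and "a = 0 \<Longrightarrow> integral S u = 0 \<Longrightarrow> integral S w \<le> 0"
    and "b = 0 \<Longrightarrow> integral S v = 0 \<Longrightarrow> integral S w \<le> 0"
  shows "integral S w \<le> integral S u powr a * integral S v powr b"
proof (rule le_powr_mult_powrI[OF ab])
  show "integral S u \<ge> 0" "integral S v \<ge> 0"
    using pw assms(4,5) by (auto intro: integral_nonneg)
  fix s t :: real assume st: "s > 0" "t > 0"
  let ?c = "s powr a * t powr b"
  have mean: "((\<lambda>x. (a * s * u x + b * t * v x) / ?c) has_integral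
      (a * s * integral S u + b * t * integral S v) / ?c) S"
    using assms(4,5)
    by (intro has_integral_divide has_integral_add has_integral_cmult_real integrable_integral)
  have "integral S w \<le> integral S (\<lambda>x. (a * s * u x + b * t * v x) / ?c)"
    using assms(6) mean pw powr_mult_powr_le_scaled_mean[OF ab st]
    by (intro integral_le) auto
  also have "\<dots> = (a * s * integral S u + b * t * integral S v) / ?c"
    using mean by (rule integral_unique)
  finally show "integral S w \<le> (a * s * integral S u + b * t * integral S v) / ?c" .
qed (use assms(8,9) in auto)

lemma integrable_on_cball_if_continuous:
  fixes u :: "'n::euclidean_space \<Rightarrow> real"
  assumes "continuous_on UNIV u"
  shows "u integrable_on cball c r"
  using borel_integrable_compact[of "cball c r" u] assms
  by (intro set_borel_integral_eq_integral(1))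
     (auto simp: set_integrable_def intro: continuous_on_subset)

lemma negligible_cball_diff_ball: "negligible (cball c r - ball c r)"
  using negligible_sphere[of c r] by (simp add: cball_diff_eq_sphere)

lemma integrable_on_ball_if_continuous:
  fixes u :: "'n::euclidean_space \<Rightarrow> real"
  assumes "continuous_on UNIV u"
  shows "u integrable_on ball c r"
  using negligible_cball_diff_ball[of c r]
  by (intro integrable_spike_set[OF integrable_on_cball_if_continuous[OF assms, of c r]])
     (auto intro: negligible_subset)

lemma eq_0_if_integral_ball_eq_0:
  fixes u :: "'n::euclidean_space \<Rightarrow> real"
  assumes r: "r > 0" and cont: "continuous_on UNIV u" and nonneg: "\<And>x. u x \<ge> 0"
    and zero: "integral (ball c r) u = 0" and x: "x \<in> ball c r"
  shows "u x = 0"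
proof (rule has_integral_0_closure_imp_0[of "ball c r" u x])
  show "emeasure lborel (closure (ball c r)) = emeasure lborel (ball c r)"
    using r by (simp add: emeasure_ball emeasure_cball)
  show "0 < emeasure lborel (ball c r)"
    using content_ball_pos[OF r, of c] emeasure_lborel_ball_finite[of c r]
    by (simp add: emeasure_eq_ennreal_measure)
  have "integral (cball c r) u = integral (ball c r) u"
    using negligible_cball_diff_ball[of c r] by (intro integral_spike_set) (auto intro: negligible_subset)
  then show "(u has_integral 0) (closure (ball c r))"
    using r zero integrable_on_cball_if_continuous[OF cont, of c r]
    by (simp add: has_integral_integral)
qed (use assms emeasure_lborel_ball_finite[of c r] in \<open>auto intro: continuous_on_subset\<close>)

lemma absolutely_integrable_on_indicator_mult:
  fixes f :: "'a::euclidean_space \<Rightarrow> complex"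
  assumes f: "f absolutely_integrable_on S" and "S \<in> sets lebesgue" "\<tau> \<in> sets lebesgue"
  shows "(\<lambda>\<omega>. indicator \<tau> \<omega> * f \<omega>) absolutely_integrable_on S"
proof (rule absolutely_integrable_bounded_measurable_product[OF bilinear_times _ _ _ f])
  show "(indicator \<tau> :: 'a \<Rightarrow> complex) \<in> borel_measurable (lebesgue_on S)"
    by (intro measurable_restrict_space1 borel_measurable_indicator assms)
  show "bounded ((indicator \<tau> :: 'a \<Rightarrow> complex) ` S)"
    unfolding bounded_iff by (intro exI[of _ 1]) (simp add: indicator_def)
qed fact

lemma Eop_integrand_absolutely_integrable:
  fixes g :: "'a::euclidean_space \<Rightarrow> complex"
  assumes g: "g absolutely_integrable_on ball 0 1"
  shows "(\<lambda>\<omega>. exp (\<i> * complex_of_real (fst x \<bullet> \<omega> + snd x * (norm \<omega>)^2)) * g \<omega>)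
           absolutely_integrable_on ball 0 1"
proof (rule absolutely_integrable_bounded_measurable_product[OF bilinear_times _ _ _ g])
  show "(\<lambda>\<omega>. exp (\<i> * complex_of_real (fst x \<bullet> \<omega> + snd x * (norm \<omega>)^2)))
          \<in> borel_measurable (lebesgue_on (ball 0 1))"
    by (intro continuous_imp_measurable_on_sets_lebesgue continuous_intros) auto
  show "bounded ((\<lambda>\<omega>. exp (\<i> * complex_of_real (fst x \<bullet> \<omega> + snd x * (norm \<omega>)^2))) ` ball 0 1)"
    unfolding bounded_iff by (intro exI[of _ 1]) auto
qed auto

lemma continuous_on_Eop:
  fixes g :: "'a::euclidean_space \<Rightarrow> complex"
  assumes g: "g absolutely_integrable_on ball 0 1"
  shows "continuous_on UNIV (Eop g)"
proof (rule continuous_on_sequentiallyI)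
  fix y :: "nat \<Rightarrow> 'a \<times> real" and x assume y: "y \<longlonglongrightarrow> x"
  let ?F = "\<lambda>z \<omega>. exp (\<i> * complex_of_real (fst z \<bullet> \<omega> + snd z * (norm \<omega>)^2)) * g \<omega>"
  have "(\<lambda>k. integral (ball 0 1) (?F (y k))) \<longlonglongrightarrow> integral (ball 0 1) (?F x)"
  proof (rule dominated_convergence(2))
    show "?F (y k) integrable_on ball 0 1" for k
      using Eop_integrand_absolutely_integrable[OF g] set_lebesgue_integral_eq_integral(1) by blast
    show "(\<lambda>\<omega>. norm (g \<omega>)) integrable_on ball 0 1"
      using g absolutely_integrable_on_def by blast
    show "norm (?F (y k) \<omega>) \<le> norm (g \<omega>)" for k \<omega>
      by (simp add: norm_mult)
    show "(\<lambda>k. ?F (y k) \<omega>) \<longlonglongrightarrow> ?F x \<omega>" for \<omega>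
      using y by (intro tendsto_intros tendsto_fst tendsto_snd)
  qed
  then show "(\<lambda>n. Eop g (y n)) \<longlonglongrightarrow> Eop g x"
    by (simp add: Eop_def)
qed

lemma continuous_on_norm_Eop_powr:
  fixes g :: "'a::euclidean_space \<Rightarrow> complex"
  assumes "g absolutely_integrable_on ball 0 1" and "q > 0"
  shows "continuous_on UNIV (\<lambda>x. cmod (Eop g x) powr q)"
  using assms by (intro continuous_on_powr' continuous_on_norm continuous_on_Eop) auto

text \<open>The vanishing case is needed for a = 0 or b = 0, because 0 powr 0 = 0: if the p1-integral
  vanishes, then by continuity E g vanishes on the ball, so the p-integral vanishes too.\<close>

lemma integral_norm_Eop_powr_interpolation:
  fixes g :: "'a::euclidean_space \<Rightarrow> complex"
  assumes g: "g absolutely_integrable_on ball 0 1"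
    and r: "r > 0"
    and p: "p > 0" "p1 > 0" "p2 > 0"
    and ab: "0 \<le> a" "0 \<le> b" "a + b = 1" "p1 * a + p2 * b = p"
  shows "integral (ball c r) (\<lambda>x. cmod (Eop g x) powr p)
     \<le> integral (ball c r) (\<lambda>x. cmod (Eop g x) powr p1) powr a
       * integral (ball c r) (\<lambda>x. cmod (Eop g x) powr p2) powr b"
proof (rule Holder_integral[OF ab(1-3)])
  let ?I = "\<lambda>q. integral (ball c r) (\<lambda>x. cmod (Eop g x) powr q)"
  have vanish: "?I p \<le> 0" if "q > 0" and "?I q = 0" for q
  proof -
    have "cmod (Eop g x) powr q = 0" if "x \<in> ball c r" for x
      by (rule eq_0_if_integral_ball_eq_0[OF r continuous_on_norm_Eop_powr[OF g \<open>q > 0\<close>]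
            _ \<open>?I q = 0\<close> that]) simp
    then have "?I p = integral (ball c r) (\<lambda>x. 0)"
      by (intro integral_cong) simp
    then show ?thesis by simp
  qed
  show "?I p1 = 0 \<Longrightarrow> ?I p \<le> 0" "?I p2 = 0 \<Longrightarrow> ?I p \<le> 0"
    using vanish p by auto
  have int: "(\<lambda>x. cmod (Eop g x) powr q) integrable_on ball c r" if "q > 0" for q
    using that by (intro integrable_on_ball_if_continuous continuous_on_norm_Eop_powr g)
  show "(\<lambda>x. cmod (Eop g x) powr p1) integrable_on ball c r"
    "(\<lambda>x. cmod (Eop g x) powr p2) integrable_on ball c r"
    "(\<lambda>x. cmod (Eop g x) powr p) integrable_on ball c r"
    using int p by auto
  fix x
  show "0 \<le> cmod (Eop g x) powr p1 \<and> 0 \<le> cmod (Eop g x) powr p2 \<and>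
        cmod (Eop g x) powr p = (cmod (Eop g x) powr p1) powr a * (cmod (Eop g x) powr p2) powr b"
  proof (cases "Eop g x = 0")
    case False
    then show ?thesis using ab by (simp add: powr_powr flip: powr_add)
  qed simp
qed

definition cap_energy :: "real \<Rightarrow> ('a::euclidean_space \<Rightarrow> complex) \<Rightarrow> 'a set \<Rightarrow>
    ('a \<times> real) set \<Rightarrow> real" where
  "cap_energy p f \<tau> B = integral B (\<lambda>x. cmod (Eop (\<lambda>\<omega>. indicator \<tau> \<omega> * f \<omega>) x) powr p)"

definition transverse :: "real \<Rightarrow> nat \<Rightarrow> (nat \<Rightarrow> ('a::euclidean_space \<times> real) set) \<Rightarrow>
    'a set \<Rightarrow> bool" where
  "transverse K A V \<tau> \<longleftrightarrow> (\<forall>a<A. set_angle (Gmap ` \<tau>) (V a) > 1 / K)"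

definition max_transverse_energy :: "real \<Rightarrow> nat \<Rightarrow> real \<Rightarrow> 'a::euclidean_space set set \<Rightarrow>
    ('a \<Rightarrow> complex) \<Rightarrow> (nat \<Rightarrow> ('a \<times> real) set) \<Rightarrow> ('a \<times> real) set \<Rightarrow> real" where
  "max_transverse_energy K A p T f V B =
     Max (insert 0 ((\<lambda>\<tau>. cap_energy p f \<tau> B) ` {\<tau> \<in> T. transverse K A V \<tau>}))"

definition subspace_tuples :: "nat \<Rightarrow> nat \<Rightarrow> (nat \<Rightarrow> ('a::euclidean_space \<times> real) set) set" where
  "subspace_tuples k A = {V. \<forall>a<A. subspace (V a) \<and> dim (V a) = k - 1}"

lemma mu_eq_INF_max_transverse_energy:
  "mu k K A p T f B = (INF V \<in> subspace_tuples k A. max_transverse_energy K A p T f V B)"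
  by (simp add: mu_def max_transverse_energy_def subspace_tuples_def cap_energy_def
      transverse_def setcompr_eq_image conj_commute)

lemma cap_energy_nonneg: "0 \<le> cap_energy p f \<tau> B"
  unfolding cap_energy_def
  by (cases "(\<lambda>x. cmod (Eop (\<lambda>\<omega>. indicator \<tau> \<omega> * f \<omega>) x) powr p) integrable_on B")
     (simp_all add: integral_nonneg not_integrable_integral)

context
  fixes T :: "'a::euclidean_space set set"
  assumes finite_T: "finite T"
begin

lemma finite_insert_0_transverse_energies:
  "finite (insert 0 ((\<lambda>\<tau>. cap_energy p f \<tau> B) ` {\<tau> \<in> T. transverse K A V \<tau>}))"
  using finite_T by simp

lemma max_transverse_energy_nonneg: "0 \<le> max_transverse_energy K A p T f V B"
  unfolding max_transverse_energy_def
  using finite_insert_0_transverse_energies by (intro Max_ge) auto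

lemma max_transverse_energy_in:
  "max_transverse_energy K A p T f V B \<in> insert 0 ((\<lambda>\<tau>. cap_energy p f \<tau> B) ` T)"
  unfolding max_transverse_energy_def
  using Max_in[OF finite_insert_0_transverse_energies] by blast

lemma cap_energy_le_max_transverse_energy:
  "\<tau> \<in> T \<Longrightarrow> transverse K A V \<tau> \<Longrightarrow> cap_energy p f \<tau> B \<le> max_transverse_energy K A p T f V B"
  unfolding max_transverse_energy_def
  using finite_insert_0_transverse_energies by (intro Max_ge) auto

lemma max_transverse_energy_leI:
  assumes "0 \<le> c" "\<And>\<tau>. \<tau> \<in> T \<Longrightarrow> transverse K A V \<tau> \<Longrightarrow> cap_energy p f \<tau> B \<le> c"
  shows "max_transverse_energy K A p T f V B \<le> c"
  unfolding max_transverse_energy_def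
  using finite_insert_0_transverse_energies assms by (subst Max_le_iff) auto

end

lemma subspace_tuples_nonempty:
  assumes "k - 1 \<le> DIM('a::euclidean_space \<times> real)"
  shows "subspace_tuples k A \<noteq> ({} :: (nat \<Rightarrow> ('a \<times> real) set) set)"
proof -
  have "k - 1 \<le> dim (UNIV :: ('a \<times> real) set)" using assms by (simp add: dim_UNIV)
  then obtain W :: "('a \<times> real) set" where "subspace W" "dim W = k - 1"
    by (metis choose_subspace_of_subspace)
  then have "(\<lambda>_. W) \<in> subspace_tuples k A" by (simp add: subspace_tuples_def)
  then show ?thesis by blast
qed

lemma mu_attained:
  fixes T :: "'a::euclidean_space set set"
  assumes "finite T" and "k - 1 \<le> DIM('a \<times> real)"
  shows "\<exists>V \<in> subspace_tuples k A. mu k K A p T f B = max_transverse_energy K A p T f V B"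
    and "V \<in> subspace_tuples k A \<Longrightarrow> mu k K A p T f B \<le> max_transverse_energy K A p T f V B"
proof -
  let ?M = "(\<lambda>V. max_transverse_energy K A p T f V B) ` subspace_tuples k A"
  have "?M \<subseteq> insert 0 ((\<lambda>\<tau>. cap_energy p f \<tau> B) ` T)"
    using max_transverse_energy_in[OF assms(1)] by blast
  then have fin: "finite ?M" by (rule finite_subset) (simp add: assms(1))
  have ne: "?M \<noteq> {}" using subspace_tuples_nonempty[OF assms(2)] by blast
  have mu: "mu k K A p T f B = Min ?M"
    unfolding mu_eq_INF_max_transverse_energy using cInf_eq_Min[OF fin ne] by simp
  have "Min ?M \<in> ?M" using fin ne by (rule Min_in)
  then show "\<exists>V \<in> subspace_tuples k A. mu k K A p T f B = max_transverse_energy K A p T f V B"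
    using mu by auto
  show "V \<in> subspace_tuples k A \<Longrightarrow> mu k K A p T f B \<le> max_transverse_energy K A p T f V B"
    using mu fin by simp
qed

lemma mu_nonneg:
  fixes T :: "'a::euclidean_space set set"
  assumes "finite T" and "k - 1 \<le> DIM('a \<times> real)"
  shows "0 \<le> mu k K A p T f B"
proof -
  obtain V where "mu k K A p T f B = max_transverse_energy K A p T f V B"
    using mu_attained(1)[OF assms] by blast
  then show ?thesis using max_transverse_energy_nonneg[OF assms(1)] by simp
qed

lemma BLp_nonneg:
  fixes T :: "'a::euclidean_space set set"
  assumes "finite T" and "k - 1 \<le> DIM('a \<times> real)"
  shows "0 \<le> BLp k K A p T f \<B> U"
  unfolding BLp_def using mu_nonneg[OF assms] by (intro sum_nonneg) auto

definition append_tuple :: "nat \<Rightarrow> (nat \<Rightarrow> 'v) \<Rightarrow> (nat \<Rightarrow> 'v) \<Rightarrow> nat \<Rightarrow> 'v" where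
  "append_tuple A1 V1 V2 = (\<lambda>i. if i < A1 then V1 i else V2 (i - A1))"

lemma append_tuple_in_subspace_tuples:
  "V1 \<in> subspace_tuples k A1 \<Longrightarrow> V2 \<in> subspace_tuples k A2 \<Longrightarrow>
    append_tuple A1 V1 V2 \<in> subspace_tuples k (A1 + A2)"
  by (simp add: subspace_tuples_def append_tuple_def)

lemma transverse_append_tupleD:
  assumes "transverse K (A1 + A2) (append_tuple A1 V1 V2) \<tau>"
  shows "transverse K A1 V1 \<tau>" and "transverse K A2 V2 \<tau>"
proof -
  note angle = assms[unfolded transverse_def, rule_format]
  show "transverse K A1 V1 \<tau>"
    unfolding transverse_def
  proof (intro allI impI)
    fix i assume "i < A1"
    then show "set_angle (Gmap ` \<tau>) (V1 i) > 1 / K"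
      using angle[of i] by (simp add: append_tuple_def)
  qed
  show "transverse K A2 V2 \<tau>"
    unfolding transverse_def
  proof (intro allI impI)
    fix i assume "i < A2"
    then show "set_angle (Gmap ` \<tau>) (V2 i) > 1 / K"
      using angle[of "A1 + i"] by (simp add: append_tuple_def)
  qed
qed

lemma mu_add_le_mu_powr_mult:
  fixes T :: "'a::euclidean_space set set"
  assumes finT: "finite T" and kd: "k - 1 \<le> DIM('a \<times> real)" and "0 \<le> a" "0 \<le> b"
    and cap: "\<And>\<tau>. \<tau> \<in> T \<Longrightarrow>
      cap_energy p f \<tau> B \<le> cap_energy p1 f \<tau> B powr a * cap_energy p2 f \<tau> B powr b"
  shows "mu k K (A1 + A2) p T f B \<le> mu k K A1 p1 T f B powr a * mu k K A2 p2 T f B powr b"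
proof -
  obtain V1 where V1: "V1 \<in> subspace_tuples k A1"
    "mu k K A1 p1 T f B = max_transverse_energy K A1 p1 T f V1 B"
    using mu_attained(1)[OF finT kd] by blast
  obtain V2 where V2: "V2 \<in> subspace_tuples k A2"
    "mu k K A2 p2 T f B = max_transverse_energy K A2 p2 T f V2 B"
    using mu_attained(1)[OF finT kd] by blast
  let ?V = "append_tuple A1 V1 V2"
  have "mu k K (A1 + A2) p T f B \<le> max_transverse_energy K (A1 + A2) p T f ?V B"
    by (intro mu_attained(2)[OF finT kd] append_tuple_in_subspace_tuples V1(1) V2(1))
  also have "\<dots> \<le> max_transverse_energy K A1 p1 T f V1 B powr a
      * max_transverse_energy K A2 p2 T f V2 B powr b"
  proof (rule max_transverse_energy_leI[OF finT])
    fix \<tau> assume \<tau>: "\<tau> \<in> T" and "transverse K (A1 + A2) ?V \<tau>"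
    then have "transverse K A1 V1 \<tau>" "transverse K A2 V2 \<tau>"
      by (auto dest: transverse_append_tupleD)
    then have "cap_energy p1 f \<tau> B powr a * cap_energy p2 f \<tau> B powr b
        \<le> max_transverse_energy K A1 p1 T f V1 B powr a * max_transverse_energy K A2 p2 T f V2 B powr b"
      using \<tau> assms(3,4)
      by (intro mult_mono powr_mono2 cap_energy_nonneg cap_energy_le_max_transverse_energy[OF finT])
         auto
    with cap[OF \<tau>] show "cap_energy p f \<tau> B \<le> max_transverse_energy K A1 p1 T f V1 B powr a
        * max_transverse_energy K A2 p2 T f V2 B powr b"
      by linarith
  qed simp
  finally show ?thesis using V1(2) V2(2) by simp
qed

lemma BLp_add_le_BLp_powr_mult:
  fixes T :: "'a::euclidean_space set set"
  assumes "finite \<B>" and "finite T" and "k - 1 \<le> DIM('a \<times> real)"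
    and "0 \<le> a" "0 \<le> b" "a + b = 1"
    and "\<And>B \<tau>. B \<in> \<B> \<Longrightarrow> \<tau> \<in> T \<Longrightarrow>
      cap_energy p f \<tau> B \<le> cap_energy p1 f \<tau> B powr a * cap_energy p2 f \<tau> B powr b"
  shows "BLp k K (A1 + A2) p T f \<B> U
    \<le> BLp k K A1 p1 T f \<B> U powr a * BLp k K A2 p2 T f \<B> U powr b"
  unfolding BLp_def
  using assms by (intro Holder_sum mu_nonneg mu_add_le_mu_powr_mult conjI) auto

lemma interpolation_exponents:
  fixes p p1 p2 \<alpha>1 \<alpha>2 :: real
  assumes "p > 0" "p1 > 0" "p2 > 0" "\<alpha>1 + \<alpha>2 = 1" "1 / p = \<alpha>1 / p1 + \<alpha>2 / p2"
  shows "\<alpha>1 * p / p1 + \<alpha>2 * p / p2 = 1" and "p1 * (\<alpha>1 * p / p1) + p2 * (\<alpha>2 * p / p2) = p"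
proof -
  have "\<alpha>1 * p / p1 + \<alpha>2 * p / p2 = p * (1 / p)"
    using assms(5) by (simp add: field_simps)
  then show "\<alpha>1 * p / p1 + \<alpha>2 * p / p2 = 1" using assms(1) by simp
  show "p1 * (\<alpha>1 * p / p1) + p2 * (\<alpha>2 * p / p2) = p"
    using assms(2-4) by (simp flip: distrib_right)
qed

lemma root_le_of_le_powr_mult:
  fixes X Y Z p p1 p2 \<alpha>1 \<alpha>2 :: real
  assumes "0 \<le> X" "0 \<le> Y" "0 \<le> Z" "p > 0" "p1 > 0" "p2 > 0"
    and "Z \<le> X powr (\<alpha>1 * p / p1) * Y powr (\<alpha>2 * p / p2)"
  shows "Z powr (1 / p) \<le> (X powr (1 / p1)) powr \<alpha>1 * (Y powr (1 / p2)) powr \<alpha>2"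
proof -
  have "Z powr (1 / p) \<le> (X powr (\<alpha>1 * p / p1) * Y powr (\<alpha>2 * p / p2)) powr (1 / p)"
    using assms by (intro powr_mono2) auto
  also have "\<dots> = X powr (\<alpha>1 * p / p1 * (1 / p)) * Y powr (\<alpha>2 * p / p2 * (1 / p))"
    using assms(1,2) by (simp add: powr_mult powr_powr)
  also have "\<dots> = (X powr (1 / p1)) powr \<alpha>1 * (Y powr (1 / p2)) powr \<alpha>2"
    using assms(4) by (simp add: powr_powr mult.commute)
  finally show ?thesis .
qed

theorem lemma4p2:
  fixes f :: "'a::euclidean_space \<Rightarrow> complex"
    and T :: "'a set set"
    and \<B> \<U> :: "('a \<times> real) set set"
    and U :: "('a \<times> real) set"
    and K R p p1 p2 \<alpha>1 \<alpha>2 :: real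
    and k A A1 A2 :: nat
  assumes "f absolutely_integrable_on ball 0 1"
    and "K > 0" and "R > 0"
    and "2 \<le> k" and "k \<le> DIM('a \<times> real)"
    and "cap_decomp K T"
    and "ball_decomp K R \<B>"
    and "\<U> \<subseteq> \<B>" and "U = \<Union>\<U>"
    and "1 \<le> p" and "1 \<le> p1" and "1 \<le> p2"
    and "0 \<le> \<alpha>1" and "\<alpha>1 \<le> 1" and "0 \<le> \<alpha>2" and "\<alpha>2 \<le> 1"
    and "\<alpha>1 + \<alpha>2 = 1"
    and "1 / p = \<alpha>1 / p1 + \<alpha>2 / p2"
    and "A = A1 + A2"
  shows "BLp k K A p T f \<B> U powr (1 / p)
          \<le> (BLp k K A1 p1 T f \<B> U powr (1 / p1)) powr \<alpha>1
             * (BLp k K A2 p2 T f \<B> U powr (1 / p2)) powr \<alpha>2"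
proof -
  have p: "p > 0" "p1 > 0" "p2 > 0" using assms(10-12) by auto
  define a where "a = \<alpha>1 * p / p1"
  define b where "b = \<alpha>2 * p / p2"
  have ab: "0 \<le> a" "0 \<le> b" "a + b = 1" "p1 * a + p2 * b = p"
    using interpolation_exponents[OF p assms(17,18)] p assms(13,15) by (simp_all add: a_def b_def)
  have T: "finite T" "\<And>\<tau>. \<tau> \<in> T \<Longrightarrow> \<tau> \<in> sets lebesgue"
    using assms(6) by (auto simp: cap_decomp_def)
  have kd: "k - 1 \<le> DIM('a \<times> real)" using assms(5) by simp
  have "BLp k K A p T f \<B> U \<le> BLp k K A1 p1 T f \<B> U powr a * BLp k K A2 p2 T f \<B> U powr b"
    unfolding \<open>A = A1 + A2\<close>
  proof (rule BLp_add_le_BLp_powr_mult[OF _ T(1) kd ab(1-3)])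
    show "finite \<B>" using assms(7) by (simp add: ball_decomp_def)
    fix B \<tau> assume "B \<in> \<B>" and \<tau>: "\<tau> \<in> T"
    then obtain c where B: "B = ball c (K^2)" using assms(7) by (auto simp: ball_decomp_def)
    have "(\<lambda>\<omega>. indicator \<tau> \<omega> * f \<omega>) absolutely_integrable_on ball 0 1"
      by (intro absolutely_integrable_on_indicator_mult assms(1) T(2)[OF \<tau>]) simp
    then show "cap_energy p f \<tau> B \<le> cap_energy p1 f \<tau> B powr a * cap_energy p2 f \<tau> B powr b"
      unfolding cap_energy_def B
      by (rule integral_norm_Eop_powr_interpolation[OF _ _ p ab]) (use assms(2) in simp)
  qed
  then show ?thesis
    unfolding a_def b_def using BLp_nonneg[OF T(1) kd] p by (intro root_le_of_le_powr_mult)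
qed

end
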